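(* Let $\mathcal C$ be a clustering problem satisfying Assumption 1, $P\in\Lambda$ with $p_{\min}=\min_{i\in[K]}\min_{a\in\mathcal X}P_i(a)>0$, $\gamma\in(0,1/K)$, and $\sigma'\in\mathcal C\setminus\{\sigma_P\}$. Then for all $x,y\in\Sigma_K^\gamma$, $$\|\nabla_wg_P^{\sigma'}(x)-\nabla_wg_P^{\sigma'}(y)\|_\infty\le\frac{D}{\gamma}\|x-y\|_\infty,\qquad D=\Big(\max_{\sigma''\in\mathcal C}\max_{m\in[M_{\sigma''}]}|\mathcal A_m^{\sigma''}|\Big)\frac{|\mathcal X|(1-p_{\min})}{4p_{\min}}.$$
   Context: Framework. Let $\mathcal X$ be a finite alphabet with $|\mathcal X|\ge2$, $\mathcal P(\mathcal X)$ the set of probability distributions on $\mathcal X$, and $K\ge2$ an integer (number of arms); $[n]=\{1,\dots,n\}$. A hypothesis is a collection $\sigma=\{\mathcal A_1^\sigma,\dots,\mathcal A_{M_\sigma}^\sigma\}$ ($M_\sigma\ge1$) of pairwise disjoint subsets of $[K]$, each of cardinality at least 2 (clusters); let $\mathcal A^\sigma_{M_\sigma+1}=[K]\setminus\bigcup_{m\le M_\sigma}\mathcal A_m^\sigma$. $\Lambda_\sigma$ is the set of $P\in\mathcal P(\mathcal X)^K$ with $P_i=P_j$ whenever $i,j\in\mathcal A_m^\sigma$ for some $m\le M_\sigma$, and $P_i\neq P_j$ whenever $i\in\mathcal A_{m_1}^\sigma$, $j\in\mathcal A_{m_2}^\sigma$ with $m_1\ne m_2\in[M_\sigma+1]$.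 A clustering problem is a finite set $\mathcal C$ of hypotheses with $|\mathcal C|\ge2$; $\Lambda=\bigcup_{\sigma\in\mathcal C}\Lambda_\sigma$. Hypothesis $\sigma$ dominates $\sigma'$ if every cluster of $\sigma$ is a subset of some cluster of $\sigma'$. Assumption 1: (i) there is no pair $\sigma\neq\sigma'$ in $\mathcal C$ such that $\sigma$ dominates $\sigma'$; (ii) every $P\in\Lambda$ belongs to $\Lambda_\sigma$ for exactly one $\sigma\in\mathcal C$, denoted $\sigma_P$. Functions. $D(P\|Q)$ is the KL divergence. $\Sigma_K=\{w\in\mathbb R^K: w_i\ge0,\sum_iw_i=1\}$ and $\Sigma_K^\gamma=\{w\in\Sigma_K:w_i\ge\gamma\ \forall i\}$. For $\mathcal A\subseteq[K]$, $G(P_{\mathcal A},w_{\mathcal A})=0$ if $w_i=0$ for all $i\in\mathcal A$, and otherwise $G(P_{\mathcal A},w_{\mathcal A})=\sum_{i\in\mathcal A}w_iD(P_i\|W)$ with $W=\sum_{i\in\mathcal A}w_iP_i/\sum_{i\in\mathcal A}w_i$. For $\sigma\in\mathcal C$, $g_P^\sigma(w)=\sum_{m=1}^{M_\sigma}G(P_{\mathcal A_m^\sigma},w_{\mathcal A_m^\sigma})$. The gradient $\nabla_w g_P^{\sigma'}(w)$ is the vector of partial derivatives in $w$ of the formula defining $g_P^{\sigma'}$ (on the positive orthant); explicitly its $i$-th coordinate is $D(P_i\|W_m)$ if $i\in\mathcal A_m^{\sigma'}$, with $W_m=\sum_{j\in\mathcal A_m^{\sigma'}}w_jP_j/\sum_{j\in\mathcal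 A_m^{\sigma'}}w_j$, and $0$ if $i$ is in no cluster of $\sigma'$. *)

theory Defs
  imports Complex_Main
begin

text \<open>Arms are indexed by {1..K}; a distribution on the finite alphabet 'x is a
  function 'x \<Rightarrow> real; a configuration P assigns a distribution P i to every arm i.\<close>

definition is_dist :: "('x::finite \<Rightarrow> real) \<Rightarrow> bool" where
  "is_dist p \<longleftrightarrow> (\<forall>a. p a \<ge> 0) \<and> sum p UNIV = 1"

definition is_hypothesis :: "nat \<Rightarrow> nat set set \<Rightarrow> bool" where
  "is_hypothesis K \<sigma> \<longleftrightarrow> finite \<sigma> \<and> \<sigma> \<noteq> {} \<and>
     (\<forall>A\<in>\<sigma>. A \<subseteq> {1..K} \<and> card A \<ge> 2) \<and>
     (\<forall>A\<in>\<sigma>. \<forall>B\<in>\<sigma>. A \<noteq> B \<longrightarrow> A \<inter> B = {})"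

text \<open>The groups A_1,...,A_M together with the leftover group A_{M+1}.\<close>
definition groups :: "nat \<Rightarrow> nat set set \<Rightarrow> nat set set" where
  "groups K \<sigma> = insert ({1..K} - \<Union>\<sigma>) \<sigma>"

definition in_Lambda :: "nat \<Rightarrow> nat set set \<Rightarrow> (nat \<Rightarrow> 'x::finite \<Rightarrow> real) \<Rightarrow> bool" where
  "in_Lambda K \<sigma> P \<longleftrightarrow> (\<forall>i\<in>{1..K}. is_dist (P i)) \<and>
     (\<forall>A\<in>\<sigma>. \<forall>i\<in>A. \<forall>j\<in>A. P i = P j) \<and>
     (\<forall>A\<in>groups K \<sigma>. \<forall>B\<in>groups K \<sigma>. A \<noteq> B \<longrightarrow> (\<forall>i\<in>A. \<forall>j\<in>B. P i \<noteq> P j))"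

definition in_Lambda_C :: "nat \<Rightarrow> nat set set set \<Rightarrow> (nat \<Rightarrow> 'x::finite \<Rightarrow> real) \<Rightarrow> bool" where
  "in_Lambda_C K C P \<longleftrightarrow> (\<exists>\<sigma>\<in>C. in_Lambda K \<sigma> P)"

definition is_clustering_problem :: "nat \<Rightarrow> nat set set set \<Rightarrow> bool" where
  "is_clustering_problem K C \<longleftrightarrow> finite C \<and> card C \<ge> 2 \<and> (\<forall>\<sigma>\<in>C. is_hypothesis K \<sigma>)"

definition dominates :: "nat set set \<Rightarrow> nat set set \<Rightarrow> bool" where
  "dominates \<sigma> \<sigma>' \<longleftrightarrow> (\<forall>A\<in>\<sigma>. \<exists>B\<in>\<sigma>'. A \<subseteq> B)"

definition assumption1 :: "'x::finite itself \<Rightarrow> nat \<Rightarrow> nat set set set \<Rightarrow> bool" where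
  "assumption1 _ K C \<longleftrightarrow>
     (\<forall>\<sigma>\<in>C. \<forall>\<sigma>'\<in>C. \<sigma> \<noteq> \<sigma>' \<longrightarrow> \<not> dominates \<sigma> \<sigma>') \<and>
     (\<forall>P :: nat \<Rightarrow> 'x \<Rightarrow> real. in_Lambda_C K C P \<longrightarrow> (\<exists>!\<sigma>. \<sigma> \<in> C \<and> in_Lambda K \<sigma> P))"

definition sigma_of :: "nat \<Rightarrow> nat set set set \<Rightarrow> (nat \<Rightarrow> 'x::finite \<Rightarrow> real) \<Rightarrow> nat set set" where
  "sigma_of K C P = (THE \<sigma>. \<sigma> \<in> C \<and> in_Lambda K \<sigma> P)"

definition KL :: "('x::finite \<Rightarrow> real) \<Rightarrow> ('x \<Rightarrow> real) \<Rightarrow> real" where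
  "KL p q = (\<Sum>a\<in>UNIV. if p a = 0 then 0 else p a * ln (p a / q a))"

definition mixture :: "(nat \<Rightarrow> 'x::finite \<Rightarrow> real) \<Rightarrow> (nat \<Rightarrow> real) \<Rightarrow> nat set \<Rightarrow> 'x \<Rightarrow> real" where
  "mixture P w A = (\<lambda>a. (\<Sum>j\<in>A. w j * P j a) / (\<Sum>j\<in>A. w j))"

text \<open>i-th coordinate of the gradient of g_P^sigma at w: D(P_i || W_m) if i is in
  cluster A_m of sigma, 0 if i is in no cluster (clusters are disjoint).\<close>
definition grad_g :: "(nat \<Rightarrow> 'x::finite \<Rightarrow> real) \<Rightarrow> nat set set \<Rightarrow> (nat \<Rightarrow> real) \<Rightarrow> nat \<Rightarrow> real" where
  "grad_g P \<sigma> w i = (\<Sum>A\<in>\<sigma>. if i \<in> A then KL (P i) (mixture P w A) else 0)"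

definition simplex_gamma :: "nat \<Rightarrow> real \<Rightarrow> (nat \<Rightarrow> real) set" where
  "simplex_gamma K \<gamma> = {w. (\<forall>i\<in>{1..K}. w i \<ge> \<gamma>) \<and> (\<Sum>i=1..K. w i) = 1}"

definition sup_norm :: "nat \<Rightarrow> (nat \<Rightarrow> real) \<Rightarrow> real" where
  "sup_norm K f = Max ((\<lambda>i. \<bar>f i\<bar>) ` {1..K})"

definition p_min :: "nat \<Rightarrow> (nat \<Rightarrow> 'x::finite \<Rightarrow> real) \<Rightarrow> real" where
  "p_min K P = Min {P i a | i a. i \<in> {1..K}}"

definition max_cluster_size :: "nat set set set \<Rightarrow> nat" where
  "max_cluster_size C = Max {card A | A \<sigma>. \<sigma> \<in> C \<and> A \<in> \<sigma>}"

end

theory Submission imports Defs begin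

text \<open>Every coordinate of the gradient is a KL divergence D(P_i || W), and
  D(P_i || W_x) - D(P_i || W_y) is a P_i-average of ln W_y - ln W_x. All mixtures are
  at least p_min, so ln is (1/p_min)-Lipschitz on their range, while
  W_y - W_x = (\<Sum>k (y_k - x_k) (P_k - W_x)) / (\<Sum>k y_k) has modulus at most
  (1 - p_min) \<parallel>x - y\<parallel>/\<gamma>. The resulting constant (1 - p_min)/(p_min \<gamma>) is below the
  stated one since clusters and the alphabet have at least two elements.\<close>

lemma abs_ln_diff_le:
  fixes u v p :: real
  assumes "0 < p" "p \<le> u" "p \<le> v"
  shows "\<bar>ln u - ln v\<bar> \<le> \<bar>u - v\<bar> / p"
proof -
  have u: "u > 0" and v: "v > 0" using assms by auto
  have "ln (u / v) \<le> u / v - 1" "ln (v / u) \<le> v / u - 1"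
    using ln_le_minus_one u v by simp_all
  then have "ln u - ln v \<le> (u - v) / v" "ln v - ln u \<le> (v - u) / u"
    using u v by (simp_all add: ln_div diff_divide_distrib)
  moreover have "(u - v) / v \<le> \<bar>u - v\<bar> / p" "(v - u) / u \<le> \<bar>u - v\<bar> / p"
    by (smt (verit) assms divide_le_cancel frac_le)+
  ultimately show ?thesis by linarith
qed

lemma sum_weights_ge:
  fixes w :: "nat \<Rightarrow> real"
  assumes "\<And>k. k \<in> A \<Longrightarrow> \<gamma> \<le> w k"
  shows "real (card A) * \<gamma> \<le> (\<Sum>k\<in>A. w k)"
  using sum_mono[of A "\<lambda>_. \<gamma>" w] assms by simp

lemma sum_weights_pos:
  fixes w :: "nat \<Rightarrow> real"
  assumes "finite A" "A \<noteq> {}" "0 < \<gamma>" "\<And>k. k \<in> A \<Longrightarrow> \<gamma> \<le> w k"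
  shows "0 < (\<Sum>k\<in>A. w k)"
proof -
  have "0 < real (card A) * \<gamma>" using assms(1-3) by (simp add: card_gt_0_iff)
  with sum_weights_ge[of A \<gamma> w] assms(4) show ?thesis by fastforce
qed

lemma mixture_ge:
  fixes P :: "nat \<Rightarrow> 'x::finite \<Rightarrow> real"
  assumes "finite A" "A \<noteq> {}" "0 < \<gamma>" "\<And>k. k \<in> A \<Longrightarrow> \<gamma> \<le> w k"
    and "\<And>k. k \<in> A \<Longrightarrow> p \<le> P k a"
  shows "p \<le> mixture P w A a"
proof -
  have S: "0 < (\<Sum>k\<in>A. w k)" using sum_weights_pos assms(1-4) by blast
  have "p * (\<Sum>k\<in>A. w k) \<le> (\<Sum>k\<in>A. w k * P k a)"
    unfolding sum_distrib_left
    by (rule sum_mono) (use assms(3-5) in \<open>smt (verit) mult.commute mult_right_mono\<close>)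
  then show ?thesis using S by (simp add: mixture_def pos_le_divide_eq mult.commute)
qed

lemma mixture_le:
  fixes P :: "nat \<Rightarrow> 'x::finite \<Rightarrow> real"
  assumes "finite A" "A \<noteq> {}" "0 < \<gamma>" "\<And>k. k \<in> A \<Longrightarrow> \<gamma> \<le> w k"
    and "\<And>k. k \<in> A \<Longrightarrow> P k a \<le> q"
  shows "mixture P w A a \<le> q"
proof -
  have S: "0 < (\<Sum>k\<in>A. w k)" using sum_weights_pos assms(1-4) by blast
  have "(\<Sum>k\<in>A. w k * P k a) \<le> q * (\<Sum>k\<in>A. w k)"
    unfolding sum_distrib_left
    by (rule sum_mono) (use assms(3-5) in \<open>smt (verit) mult.commute mult_left_mono\<close>)
  then show ?thesis using S by (simp add: mixture_def pos_divide_le_eq mult.commute)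
qed

lemma abs_mixture_diff_le:
  fixes P :: "nat \<Rightarrow> 'x::finite \<Rightarrow> real" and x y :: "nat \<Rightarrow> real"
  assumes A: "finite A" "A \<noteq> {}" and \<gamma>: "0 < \<gamma>"
    and x: "\<And>k. k \<in> A \<Longrightarrow> \<gamma> \<le> x k" and y: "\<And>k. k \<in> A \<Longrightarrow> \<gamma> \<le> y k"
    and \<delta>: "\<And>k. k \<in> A \<Longrightarrow> \<bar>x k - y k\<bar> \<le> \<delta>"
    and P: "\<And>k. k \<in> A \<Longrightarrow> p \<le> P k a \<and> P k a \<le> 1"
  shows "\<bar>mixture P y A a - mixture P x A a\<bar> \<le> (1 - p) * (\<delta> / \<gamma>)"
proof -
  define Sx Sy Nx Ny where "Sx = (\<Sum>k\<in>A. x k)" and "Sy = (\<Sum>k\<in>A. y k)"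
    and "Nx = (\<Sum>k\<in>A. x k * P k a)" and "Ny = (\<Sum>k\<in>A. y k * P k a)"
  define W where "W = mixture P x A a"
  have Sx: "0 < Sx" unfolding Sx_def by (rule sum_weights_pos[OF A \<gamma>]) (use x in auto)
  have Sy: "real (card A) * \<gamma> \<le> Sy" unfolding Sy_def by (rule sum_weights_ge) (use y in auto)
  have card: "0 < card A" using A by (simp add: card_gt_0_iff)
  then have cA: "0 < real (card A) * \<gamma>" using \<gamma> by simp
  have W: "p \<le> W" "W \<le> 1" unfolding W_def
    by (rule mixture_ge[OF A \<gamma>] mixture_le[OF A \<gamma>]; use x P in auto)+
  have Nx: "Nx = W * Sx" using Sx by (simp add: W_def mixture_def Nx_def Sx_def)
  have Sy_pos: "0 < Sy" using cA Sy by linarith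
  have "(\<Sum>k\<in>A. (y k - x k) * (P k a - W)) = Ny - Nx - W * (Sy - Sx)"
    unfolding Ny_def Nx_def Sy_def Sx_def
    by (simp add: algebra_simps sum_subtractf sum.distrib sum_distrib_left sum_distrib_right)
  also have "\<dots> = (mixture P y A a - W) * Sy"
    using Nx Sy_pos by (simp add: mixture_def Ny_def Sy_def algebra_simps)
  finally have diff: "mixture P y A a - W = (\<Sum>k\<in>A. (y k - x k) * (P k a - W)) / Sy"
    using Sy_pos by simp
  have "\<bar>\<Sum>k\<in>A. (y k - x k) * (P k a - W)\<bar> \<le> (\<Sum>k\<in>A. \<bar>(y k - x k) * (P k a - W)\<bar>)"
    by (rule sum_abs)
  also have "\<dots> \<le> (\<Sum>k\<in>A. \<delta> * (1 - p))"
  proof (rule sum_mono)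
    fix k assume k: "k \<in> A"
    have "\<bar>y k - x k\<bar> \<le> \<delta>" using \<delta>[OF k] by linarith
    moreover have "\<bar>P k a - W\<bar> \<le> 1 - p" using P[OF k] W by linarith
    ultimately show "\<bar>(y k - x k) * (P k a - W)\<bar> \<le> \<delta> * (1 - p)"
      by (simp add: abs_mult mult_mono')
  qed
  finally have num: "\<bar>\<Sum>k\<in>A. (y k - x k) * (P k a - W)\<bar> \<le> real (card A) * (\<delta> * (1 - p))"
    by simp
  have "\<bar>mixture P y A a - W\<bar> \<le> real (card A) * (\<delta> * (1 - p)) / (real (card A) * \<gamma>)"
    unfolding diff abs_divide using num cA Sy
    by (intro frac_le) auto
  also have "\<dots> = (1 - p) * (\<delta> / \<gamma>)" using card by (simp add: ac_simps)
  finally show ?thesis unfolding W_def .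
qed

lemma abs_ln_mixture_diff_le:
  fixes P :: "nat \<Rightarrow> 'x::finite \<Rightarrow> real" and x y :: "nat \<Rightarrow> real"
  assumes A: "finite A" "A \<noteq> {}" and \<gamma>: "0 < \<gamma>" and p: "0 < p"
    and x: "\<And>k. k \<in> A \<Longrightarrow> \<gamma> \<le> x k" and y: "\<And>k. k \<in> A \<Longrightarrow> \<gamma> \<le> y k"
    and \<delta>: "\<And>k. k \<in> A \<Longrightarrow> \<bar>x k - y k\<bar> \<le> \<delta>"
    and P: "\<And>k. k \<in> A \<Longrightarrow> p \<le> P k a \<and> P k a \<le> 1"
  shows "\<bar>ln (mixture P y A a) - ln (mixture P x A a)\<bar> \<le> (1 - p) / p * (\<delta> / \<gamma>)"
proof -
  have "p \<le> mixture P y A a" "p \<le> mixture P x A a"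
    using mixture_ge A \<gamma> x y P by blast+
  then have "\<bar>ln (mixture P y A a) - ln (mixture P x A a)\<bar>
      \<le> \<bar>mixture P y A a - mixture P x A a\<bar> / p"
    using abs_ln_diff_le p by blast
  also have "\<dots> \<le> (1 - p) * (\<delta> / \<gamma>) / p"
    by (intro divide_right_mono abs_mixture_diff_le[OF A \<gamma>]) (use x y \<delta> P p in auto)
  finally show ?thesis by (simp add: mult.commute)
qed

lemma abs_KL_diff_le:
  fixes p q r :: "'x::finite \<Rightarrow> real"
  assumes dist: "is_dist p" and pos: "\<And>a. 0 < p a" "\<And>a. 0 < q a" "\<And>a. 0 < r a"
    and B: "\<And>a. \<bar>ln (r a) - ln (q a)\<bar> \<le> B"
  shows "\<bar>KL p q - KL p r\<bar> \<le> B"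
proof -
  have "KL p q - KL p r = (\<Sum>a\<in>UNIV. p a * (ln (r a) - ln (q a)))"
    unfolding KL_def sum_subtractf[symmetric]
  proof (rule sum.cong)
    fix a
    show "(if p a = 0 then 0 else p a * ln (p a / q a)) - (if p a = 0 then 0 else p a * ln (p a / r a))
        = p a * (ln (r a) - ln (q a))"
      using pos(1-3)[of a] by (simp add: ln_div algebra_simps)
  qed simp
  also have "\<bar>\<dots>\<bar> \<le> (\<Sum>a\<in>UNIV. \<bar>p a * (ln (r a) - ln (q a))\<bar>)"
    by (rule sum_abs)
  also have "\<dots> \<le> (\<Sum>a\<in>UNIV. p a * B)"
  proof (rule sum_mono)
    fix a
    show "\<bar>p a * (ln (r a) - ln (q a))\<bar> \<le> p a * B"
      using pos(1)[of a] B[of a] by (simp add: abs_mult mult_left_mono)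
  qed
  also have "\<dots> = B" using dist by (simp add: is_dist_def sum_distrib_right[symmetric])
  finally show ?thesis .
qed

lemma is_dist_le_one:
  assumes "is_dist p"
  shows "p a \<le> 1"
  using member_le_sum[of a UNIV p] assms by (simp add: is_dist_def)

lemma grad_g_cluster:
  assumes \<sigma>: "is_hypothesis K \<sigma>" and A: "A \<in> \<sigma>" "i \<in> A"
  shows "grad_g P \<sigma> w i = KL (P i) (mixture P w A)"
proof -
  have fin: "finite \<sigma>" using \<sigma> by (simp add: is_hypothesis_def)
  have others: "\<forall>B\<in>\<sigma> - {A}. i \<notin> B" using \<sigma> A unfolding is_hypothesis_def by blast
  have "grad_g P \<sigma> w i = (if i \<in> A then KL (P i) (mixture P w A) else 0)
      + (\<Sum>B\<in>\<sigma> - {A}. if i \<in> B then KL (P i) (mixture P w B) else 0)"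
    unfolding grad_g_def by (rule sum.remove[OF fin A(1)])
  also have "(\<Sum>B\<in>\<sigma> - {A}. if i \<in> B then KL (P i) (mixture P w B) else 0) = 0"
    using others by (intro sum.neutral) auto
  finally show ?thesis using A(2) by simp
qed

lemma grad_g_outside:
  assumes "\<forall>A\<in>\<sigma>. i \<notin> A"
  shows "grad_g P \<sigma> w i = 0"
  using assms by (simp add: grad_g_def)

lemma abs_grad_g_diff_le:
  fixes P :: "nat \<Rightarrow> 'x::finite \<Rightarrow> real" and x y :: "nat \<Rightarrow> real"
  assumes \<sigma>: "is_hypothesis K \<sigma>" and \<gamma>: "0 < \<gamma>" and p: "0 < p" "p \<le> 1" and \<delta>: "0 \<le> \<delta>"
    and dist: "\<And>k. k \<in> {1..K} \<Longrightarrow> is_dist (P k)"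
    and P: "\<And>k a. k \<in> {1..K} \<Longrightarrow> p \<le> P k a"
    and x: "\<And>k. k \<in> {1..K} \<Longrightarrow> \<gamma> \<le> x k" and y: "\<And>k. k \<in> {1..K} \<Longrightarrow> \<gamma> \<le> y k"
    and xy: "\<And>k. k \<in> {1..K} \<Longrightarrow> \<bar>x k - y k\<bar> \<le> \<delta>"
    and i: "i \<in> {1..K}"
  shows "\<bar>grad_g P \<sigma> x i - grad_g P \<sigma> y i\<bar> \<le> (1 - p) / p * (\<delta> / \<gamma>)"
proof (cases "\<exists>A\<in>\<sigma>. i \<in> A")
  case False
  then show ?thesis using p \<gamma> \<delta> by (simp add: grad_g_outside)
next
  case True
  then obtain A where A: "A \<in> \<sigma>" "i \<in> A" by blast
  then have fin: "finite A" "A \<noteq> {}" and sub: "A \<subseteq> {1..K}"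
    using \<sigma> unfolding is_hypothesis_def by (auto dest: finite_subset)
  have PA: "\<And>k a. k \<in> A \<Longrightarrow> p \<le> P k a \<and> P k a \<le> 1"
    using sub P dist is_dist_le_one by blast
  have W_pos: "0 < mixture P w A a" if "\<And>k. k \<in> A \<Longrightarrow> \<gamma> \<le> w k" for w a
    using mixture_ge[OF fin \<gamma>, of w p P a] that PA p(1) by fastforce
  have "\<bar>KL (P i) (mixture P x A) - KL (P i) (mixture P y A)\<bar> \<le> (1 - p) / p * (\<delta> / \<gamma>)"
  proof (rule abs_KL_diff_le[OF dist[OF i]])
    show "0 < P i a" for a using P[OF i, of a] p(1) by simp
    show "0 < mixture P x A a" "0 < mixture P y A a" for a
      by (rule W_pos; use x y sub in auto)+
    show "\<bar>ln (mixture P y A a) - ln (mixture P x A a)\<bar> \<le> (1 - p) / p * (\<delta> / \<gamma>)" for a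
      by (rule abs_ln_mixture_diff_le[OF fin \<gamma> p(1)]) (use x y xy PA sub in auto)
  qed
  then show ?thesis unfolding grad_g_cluster[OF \<sigma> A] .
qed

lemma abs_le_sup_norm:
  "i \<in> {1..K} \<Longrightarrow> \<bar>f i\<bar> \<le> sup_norm K f"
  unfolding sup_norm_def by (rule Max_ge) auto

lemma sup_norm_le:
  "K \<ge> 1 \<Longrightarrow> (\<And>i. i \<in> {1..K} \<Longrightarrow> \<bar>f i\<bar> \<le> B) \<Longrightarrow> sup_norm K f \<le> B"
  unfolding sup_norm_def by (subst Max_le_iff) auto

lemma p_min_le:
  fixes P :: "nat \<Rightarrow> 'x::finite \<Rightarrow> real"
  assumes "i \<in> {1..K}"
  shows "p_min K P \<le> P i a"
proof -
  have "{P i a | i a. i \<in> {1..K}} = (\<lambda>(i, a). P i a) ` ({1..K} \<times> UNIV)" by auto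
  then have "finite {P i a | i a. i \<in> {1..K}}" by simp
  then show ?thesis unfolding p_min_def by (rule Min_le) (use assms in blast)
qed

lemma max_cluster_size_ge:
  assumes "is_clustering_problem K C" "\<sigma> \<in> C" "A \<in> \<sigma>"
  shows "card A \<le> max_cluster_size C"
proof -
  have "{card A | A \<sigma>. \<sigma> \<in> C \<and> A \<in> \<sigma>} = card ` \<Union>C" by auto
  moreover have "finite (\<Union>C)"
    using assms(1) unfolding is_clustering_problem_def is_hypothesis_def by auto
  ultimately show ?thesis unfolding max_cluster_size_def
    by (intro Max_ge) (use assms(2,3) in auto)
qed

lemma one_minus_div_le_scaled:
  fixes m c :: nat and p :: real
  assumes "2 \<le> m" "2 \<le> c" "0 < p" "p \<le> 1"
  shows "(1 - p) / p \<le> real m * real c * (1 - p) / (4 * p)"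
proof -
  have "4 \<le> real m * real c"
    using mult_mono[of 2 "real m" 2 "real c"] assms(1,2) by simp
  then have "4 * (1 - p) / (4 * p) \<le> real m * real c * (1 - p) / (4 * p)"
    using assms(3,4) by (intro divide_right_mono mult_right_mono) auto
  then show ?thesis by (simp only: mult_divide_mult_cancel_left_if) simp
qed

theorem lemma5:
  fixes K :: nat and C :: "nat set set set" and P :: "nat \<Rightarrow> 'x::finite \<Rightarrow> real"
    and \<gamma> :: real and \<sigma>' :: "nat set set"
  assumes "card (UNIV :: 'x set) \<ge> 2" and "K \<ge> 2"
    and "is_clustering_problem K C" and "assumption1 TYPE('x) K C"
    and "in_Lambda_C K C P"
    and "p_min K P > 0"
    and "0 < \<gamma>" and "\<gamma> < 1 / real K"
    and "\<sigma>' \<in> C - {sigma_of K C P}"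
  shows "\<forall>x\<in>simplex_gamma K \<gamma>. \<forall>y\<in>simplex_gamma K \<gamma>.
           sup_norm K (\<lambda>i. grad_g P \<sigma>' x i - grad_g P \<sigma>' y i)
             \<le> (real (max_cluster_size C) * real (card (UNIV :: 'x set)) * (1 - p_min K P) / (4 * p_min K P))
                 / \<gamma> * sup_norm K (\<lambda>i. x i - y i)"
proof (intro ballI)
  fix x y assume "x \<in> simplex_gamma K \<gamma>" "y \<in> simplex_gamma K \<gamma>"
  then have x: "\<And>k. k \<in> {1..K} \<Longrightarrow> \<gamma> \<le> x k" and y: "\<And>k. k \<in> {1..K} \<Longrightarrow> \<gamma> \<le> y k"
    by (auto simp: simplex_gamma_def)
  define p \<delta> where "p = p_min K P" and "\<delta> = sup_norm K (\<lambda>i. x i - y i)"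
  have dist: "\<And>k. k \<in> {1..K} \<Longrightarrow> is_dist (P k)"
    using assms(5) by (auto simp: in_Lambda_C_def in_Lambda_def)
  have P: "\<And>k a. k \<in> {1..K} \<Longrightarrow> p \<le> P k a" using p_min_le p_def by blast
  have "p \<le> 1" using P[of 1 undefined] is_dist_le_one[OF dist, of 1 undefined] assms(2) by force
  with assms(6) have p: "0 < p" "p \<le> 1" unfolding p_def by auto
  have xy: "\<And>k. k \<in> {1..K} \<Longrightarrow> \<bar>x k - y k\<bar> \<le> \<delta>" unfolding \<delta>_def by (rule abs_le_sup_norm)
  have \<delta>: "0 \<le> \<delta>" using xy[of 1] assms(2) by force
  have \<sigma>': "is_hypothesis K \<sigma>'" using assms(3,9) by (auto simp: is_clustering_problem_def)
  then obtain A where "A \<in> \<sigma>'" "2 \<le> card A" by (auto simp: is_hypothesis_def)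
  then have "2 \<le> max_cluster_size C" using max_cluster_size_ge[OF assms(3)] assms(9) by force
  then have "(1 - p) / p * (\<delta> / \<gamma>)
      \<le> real (max_cluster_size C) * real (card (UNIV :: 'x set)) * (1 - p) / (4 * p) * (\<delta> / \<gamma>)"
    using one_minus_div_le_scaled[OF _ assms(1) p] \<delta> assms(7) by (intro mult_right_mono) auto
  moreover have "\<bar>grad_g P \<sigma>' x i - grad_g P \<sigma>' y i\<bar> \<le> (1 - p) / p * (\<delta> / \<gamma>)"
    if "i \<in> {1..K}" for i
    by (rule abs_grad_g_diff_le[OF \<sigma>' assms(7) p \<delta>]) (use dist P x y xy that in auto)
  ultimately show "sup_norm K (\<lambda>i. grad_g P \<sigma>' x i - grad_g P \<sigma>' y i)
      \<le> (real (max_cluster_size C) * real (card (UNIV :: 'x set)) * (1 - p_min K P) / (4 * p_min K P))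
          / \<gamma> * sup_norm K (\<lambda>i. x i - y i)"
    unfolding p_def \<delta>_def using assms(2) by (intro sup_norm_le) (auto intro: order_trans)
qed

end
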